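(* The elements $x_n$ and $y_n$, $n\geq 0$, generate $F_\tau$.
   Context: Let $\tau=(\sqrt5-1)/2$. $F_\tau$ is the group, under composition, of orientation-preserving piecewise linear homeomorphisms of $[0,1]$ with finitely many breakpoints, all in $\mathbb{Z}[\tau]$, and slopes integer powers of $\tau$. Trees: finite rooted binary trees whose carets (non-leaf vertex with its two children) are each labelled $x$-type or $y$-type; the root corresponds to $[0,1]$, and at a vertex with interval $[p,p+\tau^k]$ an $x$-type caret gives children $[p,p+\tau^{k+2}]$, $[p+\tau^{k+2},p+\tau^k]$ while a $y$-type caret gives $[p,p+\tau^{k+1}]$, $[p+\tau^{k+1},p+\tau^k]$ (left, right). Leaves are numbered $0,1,\dots$ from left to right; a pair $(T_1,T_2)$ with equally many leaves represents the element mapping the $i$-th leaf interval of $T_1$ affinely increasingly onto that of $T_2$. A spine is a tree with only $x$-type carets, each non-root caret being the right child of its parent. $x_n$ ($n\ge0$) is represented by $(A,B)$, $B$ the spine with $n+2$ carets, $A$ the spine with $n+1$ carets with an $x$-type caret attached to leaf $n$; $y_n$ likewise with a $y$-type attached caret. *)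

theory Defs
  imports Complex_Main
begin

definition tau :: real where "tau = (sqrt 5 - 1) / 2"

definition Ztau :: "real set" where
  "Ztau = {of_int a + of_int b * tau | a b. True}"

definition Ftau :: "(real \<Rightarrow> real) set" where
  "Ftau = {f. (\<forall>x. x \<notin> {0..1} \<longrightarrow> f x = x) \<and> f 0 = 0 \<and> f 1 = 1 \<and>
     (\<exists>ps :: real list. \<exists>es :: int list.
        length ps = length es + 1 \<and> hd ps = 0 \<and> last ps = 1 \<and>
        sorted_wrt (<) ps \<and> set ps \<subseteq> Ztau \<and>
        (\<forall>i < length es. \<forall>x \<in> {ps ! i .. ps ! (i+1)}.
            f x = f (ps ! i) + tau powi (es ! i) * (x - ps ! i)))}"

inductive_set generated :: "(real \<Rightarrow> real) set \<Rightarrow> (real \<Rightarrow> real) set"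
  for S :: "(real \<Rightarrow> real) set" where
  gen_id: "id \<in> generated S"
| gen_base: "s \<in> S \<Longrightarrow> s \<in> generated S"
| gen_comp: "f \<in> generated S \<Longrightarrow> g \<in> generated S \<Longrightarrow> f \<circ> g \<in> generated S"
| gen_inv: "f \<in> generated S \<Longrightarrow> inv f \<in> generated S"

datatype tree = Leaf | X tree tree | Y tree tree

fun nleaves :: "tree \<Rightarrow> nat" where
  "nleaves Leaf = 1"
| "nleaves (X l r) = nleaves l + nleaves r"
| "nleaves (Y l r) = nleaves l + nleaves r"

text \<open>Leaf intervals, left to right; a pair (p,k) stands for [p, p + tau^k].\<close>
fun leaf_intervals :: "tree \<Rightarrow> real \<Rightarrow> nat \<Rightarrow> (real \<times> nat) list" where
  "leaf_intervals Leaf p k = [(p, k)]"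
| "leaf_intervals (X l r) p k =
     leaf_intervals l p (k + 2) @ leaf_intervals r (p + tau ^ (k + 2)) (k + 1)"
| "leaf_intervals (Y l r) p k =
     leaf_intervals l p (k + 1) @ leaf_intervals r (p + tau ^ (k + 1)) (k + 2)"

fun apply_pl :: "(real \<times> nat) list \<Rightarrow> (real \<times> nat) list \<Rightarrow> real \<Rightarrow> real" where
  "apply_pl ((p, k) # xs) ((q, m) # ys) x =
     (if x \<le> p + tau ^ k then q + tau powi (int m - int k) * (x - p)
      else apply_pl xs ys x)"
| "apply_pl _ _ x = x"

definition tree_pair :: "tree \<Rightarrow> tree \<Rightarrow> real \<Rightarrow> real" where
  "tree_pair T1 T2 x =
     (if 0 \<le> x \<and> x \<le> 1
      then apply_pl (leaf_intervals T1 0 0) (leaf_intervals T2 0 0) x else x)"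

fun spine :: "nat \<Rightarrow> tree" where
  "spine 0 = Leaf"
| "spine (Suc n) = X Leaf (spine n)"

fun attach :: "tree \<Rightarrow> nat \<Rightarrow> tree \<Rightarrow> tree" where
  "attach c n Leaf = (if n = 0 then c else Leaf)"
| "attach c n (X l r) = (if n < nleaves l then X (attach c n l) r
                          else X l (attach c (n - nleaves l) r))"
| "attach c n (Y l r) = (if n < nleaves l then Y (attach c n l) r
                          else Y l (attach c (n - nleaves l) r))"

definition xgen :: "nat \<Rightarrow> real \<Rightarrow> real" where
  "xgen n = tree_pair (attach (X Leaf Leaf) n (spine (n + 1))) (spine (n + 2))"

definition ygen :: "nat \<Rightarrow> real \<Rightarrow> real" where
  "ygen n = tree_pair (attach (Y Leaf Leaf) n (spine (n + 1))) (spine (n + 2))"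

end

(*
  Both sides of the equation are the set of tree pairs (T1, T2).

  Tree pairs are products of the generators: up to a spine, x_n and y_n are right rotations at
  the n-th spine caret (with an x- resp. y-caret as left child), and y_n^-1 relabels a y-caret
  on the spine as an x-caret, because Y (Y a b) c and X a (X b c) subdivide an interval in the
  same way. These moves bring every tree onto the spine.

  Conversely, products of tree pairs and elements of F_tau are tree pairs because of windows:
  for lo <= hi, the points of Z[tau] in [0, 1] whose Galois conjugates lie in [lo, hi] are the
  breakpoints of one tree, built greedily from the root, and every subdivision of [0, 1] into
  intervals of lengths tau^k with breakpoints in that set refines to this tree. The greedy
  construction is correct because the conjugate of a point of Z[tau] in (0, 1) lies outside
  (-(1 + tau), 2 + tau), and it stops because the conjugates of the endpoints of an interval of
  length tau^k are (1 + tau)^k apart.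
*)

theory Submission
  imports Defs
begin

section \<open>The ring \<open>\<int>[\<tau>]\<close> and its Galois conjugation\<close>

lemma tau_sq: "tau * tau = 1 - tau"
  unfolding tau_def by (simp add: field_simps)

lemma tau_bounds: "3/5 < tau" "tau < 13/20"
proof -
  have "2.2 < sqrt (5::real)" "sqrt (5::real) < 2.3"
    by (rule real_less_rsqrt, simp add: power2_eq_square,
        rule real_less_lsqrt, simp_all add: power2_eq_square)
  then show "3/5 < tau" "tau < 13/20"
    unfolding tau_def by simp_all
qed

lemma tau_pos: "0 < tau"
  using tau_bounds by simp

lemma tau_less_1: "tau < 1"
  using tau_bounds by simp

lemma tau_power_pos: "0 < tau ^ k"
  using tau_pos by simp

lemma tau_power_split: "tau ^ (k + 2) + tau ^ (k + 1) = tau ^ k"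
proof -
  have "tau ^ (k + 2) + tau ^ (k + 1) = tau ^ k * (tau * tau + tau)"
    by (simp add: algebra_simps power_add power2_eq_square)
  then show ?thesis
    using tau_sq by simp
qed

lemma tau_power_int_add: "tau powi (a + b) = tau powi a * tau powi b"
  using tau_pos by (simp add: power_int_add)

lemma tau_power_int_diff_mult: "tau powi (int m - int k) * tau ^ k = tau ^ m"
  using tau_power_int_add[of "int m - int k" "int k"] by simp

lemma tau_power_int_le_1_imp_nonneg: "tau powi e \<le> 1 \<Longrightarrow> 0 \<le> e"
  using power_int_strict_decreasing[of e 0 tau] tau_pos tau_less_1 by force

lemma Ztau_iff: "x \<in> Ztau \<longleftrightarrow> (\<exists>a b. x = of_int a + of_int b * tau)"
  unfolding Ztau_def by auto

lemma Ztau_add: "x \<in> Ztau \<Longrightarrow> y \<in> Ztau \<Longrightarrow> x + y \<in> Ztau"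
  unfolding Ztau_iff
proof (elim exE)
  fix a b c d
  assume "x = of_int a + of_int b * tau" "y = of_int c + of_int d * tau"
  then have "x + y = of_int (a + c) + of_int (b + d) * tau"
    by (simp add: algebra_simps)
  then show "\<exists>a b. x + y = of_int a + of_int b * tau"
    by blast
qed

lemma Ztau_diff: "x \<in> Ztau \<Longrightarrow> y \<in> Ztau \<Longrightarrow> x - y \<in> Ztau"
  unfolding Ztau_iff
proof (elim exE)
  fix a b c d
  assume "x = of_int a + of_int b * tau" "y = of_int c + of_int d * tau"
  then have "x - y = of_int (a - c) + of_int (b - d) * tau"
    by (simp add: algebra_simps)
  then show "\<exists>a b. x - y = of_int a + of_int b * tau"
    by blast
qed

lemma Ztau_mult_closed_form:
  "(of_int a + of_int b * tau) * (of_int c + of_int d * tau) =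
     of_int (a * c + b * d) + of_int (a * d + b * c - b * d) * tau"
proof -
  have "(of_int a + of_int b * tau) * (of_int c + of_int d * tau) =
      of_int (a * c) + of_int (a * d + b * c) * tau + of_int (b * d) * (tau * tau)"
    by (simp add: algebra_simps)
  then show ?thesis
    unfolding tau_sq by (simp add: algebra_simps)
qed

lemma Ztau_mult: "x \<in> Ztau \<Longrightarrow> y \<in> Ztau \<Longrightarrow> x * y \<in> Ztau"
  unfolding Ztau_iff using Ztau_mult_closed_form by blast

lemma Ztau_of_int: "of_int a \<in> Ztau"
  unfolding Ztau_iff by (rule exI[of _ a], rule exI[of _ 0]) simp

lemma Ztau_0: "0 \<in> Ztau" and Ztau_1: "1 \<in> Ztau"
  using Ztau_of_int[of 0] Ztau_of_int[of 1] by simp_all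

lemma Ztau_tau: "tau \<in> Ztau"
  unfolding Ztau_iff by (rule exI[of _ 0], rule exI[of _ 1]) simp

lemma Ztau_power: "x \<in> Ztau \<Longrightarrow> x ^ k \<in> Ztau"
  by (induction k) (simp_all add: Ztau_1 Ztau_mult)

lemma Ztau_tau_power: "tau ^ k \<in> Ztau"
  by (rule Ztau_power[OF Ztau_tau])

text \<open>\<open>\<tau>\<close> is irrational: \<open>a + b\<tau> = 0\<close> forces \<open>a\<^sup>2 - ab - b\<^sup>2 = 0\<close>, which has only the
  trivial integer solution by infinite descent (a nontrivial solution has \<open>a, b\<close> both even).\<close>

lemma golden_form_eq_0_imp_zero:
  fixes a b :: int
  shows "a * a - a * b - b * b = 0 \<Longrightarrow> a = 0 \<and> b = 0"
proof (induction "nat (\<bar>a\<bar> + \<bar>b\<bar>)" arbitrary: a b rule: less_induct)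
  case less
  have "even a \<and> even b"
  proof (rule ccontr)
    assume "\<not> (even a \<and> even b)"
    then have "odd (a * a - a * b - b * b)"
      by auto
    with less.prems show False
      by simp
  qed
  then obtain a' b' where ab: "a = 2 * a'" "b = 2 * b'"
    by (auto elim!: evenE)
  have eq': "a' * a' - a' * b' - b' * b' = 0"
    using less.prems ab by (simp add: algebra_simps)
  show ?case
  proof (cases "a = 0 \<and> b = 0")
    case False
    then have "nat (\<bar>a'\<bar> + \<bar>b'\<bar>) < nat (\<bar>a\<bar> + \<bar>b\<bar>)"
      using ab by auto
    from less.hyps[OF this eq'] ab show ?thesis
      by simp
  qed
qed

lemma tau_independent:
  fixes a b :: int
  assumes "of_int a + of_int b * tau = 0"
  shows "a = 0 \<and> b = 0"
proof -
  have a: "of_int a = - (of_int b * tau)"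
    using assms by (simp add: eq_neg_iff_add_eq_0)
  have "real_of_int (a * a - a * b - b * b) = of_int b * of_int b * (tau * tau + tau - 1)"
    unfolding of_int_diff of_int_mult a by (simp add: algebra_simps)
  then have "real_of_int (a * a - a * b - b * b) = 0"
    by (simp add: tau_sq)
  then show ?thesis
    by (intro golden_form_eq_0_imp_zero) (simp only: of_int_eq_0_iff)
qed

text \<open>The Galois conjugation of \<open>\<int>[\<tau>]\<close>, sending \<open>\<tau> = (\<surd>5 - 1)/2\<close> to \<open>-(\<surd>5 + 1)/2 = -(1 + \<tau>)\<close>.\<close>

definition tau_conj :: "real \<Rightarrow> real" where
  "tau_conj x = (THE c. \<exists>a b. x = of_int a + of_int b * tau \<and> c = of_int a - of_int b * (1 + tau))"

lemma tau_conj_eq: "tau_conj (of_int a + of_int b * tau) = of_int a - of_int b * (1 + tau)"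
  unfolding tau_conj_def
proof (rule the_equality)
  fix c
  assume "\<exists>a' b'. of_int a + of_int b * tau = of_int a' + of_int b' * tau \<and>
    c = of_int a' - of_int b' * (1 + tau)"
  then obtain a' b' where eq: "of_int a + of_int b * tau = of_int a' + of_int b' * tau"
    and c: "c = of_int a' - of_int b' * (1 + tau)"
    by blast
  have "of_int (a - a') + of_int (b - b') * tau = 0"
    using eq by (simp add: algebra_simps)
  with c show "c = of_int a - of_int b * (1 + tau)"
    using tau_independent by fastforce
qed blast

lemma tau_conj_add: "x \<in> Ztau \<Longrightarrow> y \<in> Ztau \<Longrightarrow> tau_conj (x + y) = tau_conj x + tau_conj y"
  unfolding Ztau_iff
proof (elim exE)
  fix a b c d
  assume xy: "x = of_int a + of_int b * tau" "y = of_int c + of_int d * tau"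
  then have "x + y = of_int (a + c) + of_int (b + d) * tau"
    by (simp add: algebra_simps)
  then show "tau_conj (x + y) = tau_conj x + tau_conj y"
    unfolding xy by (simp only: tau_conj_eq) (simp add: algebra_simps)
qed

lemma tau_conj_mult: "x \<in> Ztau \<Longrightarrow> y \<in> Ztau \<Longrightarrow> tau_conj (x * y) = tau_conj x * tau_conj y"
  unfolding Ztau_iff
proof (elim exE)
  fix a b c d
  assume xy: "x = of_int a + of_int b * tau" "y = of_int c + of_int d * tau"
  have "(of_int a - of_int b * (1 + tau)) * (of_int c - of_int d * (1 + tau)) =
      of_int a * of_int c - (of_int a * of_int d + of_int b * of_int c) * (1 + tau)
        + of_int b * of_int d * ((1 + tau) * (1 + tau))"
    by (simp add: algebra_simps)
  also have "(1 + tau) * (1 + tau) = 2 + tau"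
    using tau_sq by (simp add: algebra_simps)
  finally have "(of_int a - of_int b * (1 + tau)) * (of_int c - of_int d * (1 + tau)) =
      of_int (a * c + b * d) - of_int (a * d + b * c - b * d) * (1 + tau)"
    by (simp add: algebra_simps)
  then show "tau_conj (x * y) = tau_conj x * tau_conj y"
    unfolding xy Ztau_mult_closed_form by (simp only: tau_conj_eq)
qed

lemma tau_conj_tau_power: "tau_conj (tau ^ k) = (- (1 + tau)) ^ k"
proof (induction k)
  case 0
  then show ?case
    using tau_conj_eq[of 1 0] by simp
next
  case (Suc k)
  have "tau_conj tau = - (1 + tau)"
    using tau_conj_eq[of 0 1] by simp
  with Suc show ?case
    by (simp add: tau_conj_mult Ztau_tau Ztau_tau_power)
qed

section \<open>Tilings by intervals of length \<open>\<tau>\<^sup>k\<close>\<close>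

text \<open>A pair \<open>(a, k)\<close> stands for the interval \<open>[a, a + \<tau>\<^sup>k]\<close>, as in \<^const>\<open>leaf_intervals\<close>.\<close>

fun tiles :: "real \<Rightarrow> (real \<times> nat) list \<Rightarrow> real \<Rightarrow> bool" where
  "tiles p [] E \<longleftrightarrow> p = E"
| "tiles p ((a, k) # L) E \<longleftrightarrow> a = p \<and> tiles (p + tau ^ k) L E"

definition breakpoints :: "(real \<times> nat) list \<Rightarrow> real \<Rightarrow> real set" where
  "breakpoints L E = fst ` set L \<union> {E}"

lemma breakpoints_Nil [simp]: "breakpoints [] E = {E}"
  by (simp add: breakpoints_def)

lemma breakpoints_Cons [simp]: "breakpoints ((a, k) # L) E = insert a (breakpoints L E)"
  by (auto simp: breakpoints_def)

lemma breakpoints_append: "breakpoints (L1 @ L2) E = fst ` set L1 \<union> breakpoints L2 E"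
  by (auto simp: breakpoints_def)

lemma finite_breakpoints: "finite (breakpoints L E)"
  by (simp add: breakpoints_def)

lemma tiles_append: "tiles p (L1 @ L2) E \<longleftrightarrow> (\<exists>m. tiles p L1 m \<and> tiles m L2 E)"
  by (induction L1 arbitrary: p) auto

lemma tiles_start_breakpoint: "tiles p L E \<Longrightarrow> p \<in> breakpoints L E"
  by (cases L) auto

lemma breakpoints_append_tiles:
  "tiles m L2 E \<Longrightarrow> breakpoints (L1 @ L2) E = breakpoints L1 m \<union> breakpoints L2 E"
  using tiles_start_breakpoint[of m L2 E] by (auto simp: breakpoints_append breakpoints_def)

lemma tiles_breakpoints_bounds: "tiles p L E \<Longrightarrow> y \<in> breakpoints L E \<Longrightarrow> p \<le> y \<and> y \<le> E"
proof (induction L arbitrary: p y)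
  case (Cons h L)
  then obtain k where h: "h = (p, k)" and tl: "tiles (p + tau ^ k) L E"
    by (cases h) auto
  have "p + tau ^ k \<le> E"
    using Cons.IH[OF tl tiles_start_breakpoint[OF tl]] by simp
  moreover have "p \<le> y \<and> y \<le> E" if "y \<in> breakpoints L E"
    using Cons.IH[OF tl that] tau_power_pos[of k] by linarith
  moreover have "p \<le> E"
    using \<open>p + tau ^ k \<le> E\<close> tau_power_pos[of k] by linarith
  ultimately show ?case
    using Cons.prems(2) h by auto
qed simp

lemma tiles_le: "tiles p L E \<Longrightarrow> p \<le> E"
  using tiles_breakpoints_bounds[of p L E E] by (simp add: breakpoints_def)

lemma tiles_less: "tiles p L E \<Longrightarrow> L \<noteq> [] \<Longrightarrow> p < E"
proof (cases L)
  case (Cons h L')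
  moreover assume "tiles p L E"
  ultimately obtain k where "tiles (p + tau ^ k) L' E"
    by (cases h) auto
  then have "p + tau ^ k \<le> E"
    by (rule tiles_le)
  then show ?thesis
    using tau_power_pos[of k] by linarith
qed simp

lemma tiles_split:
  assumes "tiles p L E" "(a, k) \<in> set L"
  obtains L1 L2 where "L = L1 @ (a, k) # L2" "tiles p L1 a" "tiles (a + tau ^ k) L2 E"
proof -
  obtain L1 L2 where L: "L = L1 @ (a, k) # L2"
    using split_list[OF assms(2)] by blast
  with assms(1) obtain m where "tiles p L1 m" "tiles m ((a, k) # L2) E"
    by (auto simp: tiles_append)
  with L that show thesis
    by simp
qed

lemma tiles_piece_bounds:
  assumes "tiles p L E" "(a, k) \<in> set L"
  shows "p \<le> a \<and> a + tau ^ k \<le> E"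
proof -
  obtain L1 L2 where "tiles p L1 a" "tiles (a + tau ^ k) L2 E"
    using tiles_split[OF assms] .
  then show ?thesis
    using tiles_le by blast
qed

lemma tiles_piece_gap:
  assumes "tiles p L E" "(a, k) \<in> set L" "y \<in> breakpoints L E"
  shows "y \<le> a \<or> a + tau ^ k \<le> y"
proof -
  obtain L1 L2 where L: "L = L1 @ (a, k) # L2" "tiles p L1 a" "tiles (a + tau ^ k) L2 E"
    using tiles_split[OF assms(1,2)] .
  have "y \<in> breakpoints L1 a \<or> y = a \<or> y \<in> breakpoints L2 E"
    using assms(3) unfolding L(1) breakpoints_append by (auto simp: breakpoints_def)
  then show ?thesis
    using tiles_breakpoints_bounds[OF L(2), of y] tiles_breakpoints_bounds[OF L(3), of y] by auto
qed

lemma tiles_cover: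
  assumes "tiles p L E" "L \<noteq> []" "p \<le> x" "x \<le> E"
  shows "\<exists>a k. (a, k) \<in> set L \<and> a \<le> x \<and> x \<le> a + tau ^ k"
  using assms
proof (induction L arbitrary: p)
  case (Cons h L)
  then obtain k where h: "h = (p, k)" and tl: "tiles (p + tau ^ k) L E"
    by (cases h) auto
  show ?case
  proof (cases "x \<le> p + tau ^ k")
    case True
    with Cons.prems h show ?thesis
      by auto
  next
    case False
    with tl Cons.prems have "L \<noteq> []"
      by auto
    with Cons.IH[OF tl] False Cons.prems(4) show ?thesis
      by fastforce
  qed
qed simp

lemma tau_power_inject: "tau ^ k = tau ^ m \<Longrightarrow> k = m"
  using power_strict_decreasing[of k m tau] power_strict_decreasing[of m k tau] tau_pos tau_less_1
  by (cases k m rule: linorder_cases) auto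

lemma tiles_eq_if_breakpoints_eq:
  "tiles p L E \<Longrightarrow> tiles p L' E \<Longrightarrow> breakpoints L E = breakpoints L' E \<Longrightarrow> L = L'"
proof (induction L arbitrary: p L')
  case Nil
  then show ?case
    using tiles_less[of p L' E] by auto
next
  case (Cons h L)
  obtain k where h: "h = (p, k)" and tl: "tiles (p + tau ^ k) L E"
    using Cons.prems(1) by (cases h) auto
  obtain k' L1' where L': "L' = (p, k') # L1'" and tl': "tiles (p + tau ^ k') L1' E"
    using Cons.prems(2) tiles_less[OF Cons.prems(1)] by (cases L') auto
  have ge: "p + tau ^ k \<le> y" if "y \<in> breakpoints L E" for y
    using tiles_breakpoints_bounds[OF tl that] by simp
  have ge': "p + tau ^ k' \<le> y" if "y \<in> breakpoints L1' E" for y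
    using tiles_breakpoints_bounds[OF tl' that] by simp
  have "p \<notin> breakpoints L E" "p \<notin> breakpoints L1' E"
    using ge[of p] ge'[of p] tau_power_pos[of k] tau_power_pos[of k'] by auto
  moreover have "insert p (breakpoints L E) = insert p (breakpoints L1' E)"
    using Cons.prems(3) h L' by simp
  ultimately have B: "breakpoints L E = breakpoints L1' E"
    by (simp add: insert_ident)
  then have "p + tau ^ k = p + tau ^ k'"
    using ge ge' tiles_start_breakpoint[OF tl] tiles_start_breakpoint[OF tl'] by (metis order_antisym)
  then have "k = k'"
    by (simp add: tau_power_inject)
  with Cons.IH[OF tl _ B] tl' h L' show ?case
    by simp
qed

lemma tiles_Ztau: "tiles p L E \<Longrightarrow> p \<in> Ztau \<Longrightarrow> breakpoints L E \<subseteq> Ztau"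
proof (induction L arbitrary: p)
  case (Cons h L)
  then obtain k where "h = (p, k)" "tiles (p + tau ^ k) L E"
    by (cases h) auto
  with Cons show ?case
    by (auto simp: Ztau_add Ztau_tau_power)
qed simp

lemma tiles_sorted: "tiles p L E \<Longrightarrow> sorted_wrt (<) (map fst L @ [E])"
proof (induction L arbitrary: p)
  case (Cons h L)
  then obtain k where h: "h = (p, k)" and tl: "tiles (p + tau ^ k) L E"
    by (cases h) auto
  have "p < y" if "y \<in> set (map fst L @ [E])" for y
    using tiles_breakpoints_bounds[OF tl, of y] that tau_power_pos[of k]
    by (auto simp: breakpoints_def)
  with Cons.IH[OF tl] h show ?case
    by simp
qed simp

lemma tiles_nth:
  "tiles p L E \<Longrightarrow> i < length L \<Longrightarrow> (map fst L @ [E]) ! Suc i = fst (L ! i) + tau ^ snd (L ! i)"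
proof (induction L arbitrary: p i)
  case (Cons h L)
  then obtain k where h: "h = (p, k)" and tl: "tiles (p + tau ^ k) L E"
    by (cases h) auto
  show ?case
  proof (cases i)
    case 0
    with h tl show ?thesis
      by (cases L) auto
  next
    case (Suc j)
    with Cons.IH[OF tl, of j] Cons.prems(2) h show ?thesis
      by simp
  qed
qed simp

lemma tiles_leaf_intervals: "tiles p (leaf_intervals T p k) (p + tau ^ k)"
proof (induction T arbitrary: p k)
  case (X l r)
  have "tiles (p + tau ^ (k + 2)) (leaf_intervals r (p + tau ^ (k + 2)) (k + 1)) (p + tau ^ k)"
    using X.IH(2)[of "p + tau ^ (k + 2)" "k + 1"] tau_power_split[of k] by (simp add: add.assoc)
  with X.IH(1) show ?case
    by (auto simp: tiles_append simp del: power.simps)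
next
  case (Y l r)
  have "tiles (p + tau ^ (k + 1)) (leaf_intervals r (p + tau ^ (k + 1)) (k + 2)) (p + tau ^ k)"
    using Y.IH(2)[of "p + tau ^ (k + 1)" "k + 2"] tau_power_split[of k]
    by (simp add: add.assoc add.commute)
  with Y.IH(1) show ?case
    by (auto simp: tiles_append simp del: power.simps)
qed simp

lemma tiles_leaf_intervals_01: "tiles 0 (leaf_intervals T 0 0) 1"
  using tiles_leaf_intervals[of 0 T 0] by simp

lemma length_leaf_intervals: "length (leaf_intervals T p k) = nleaves T"
  by (induction T arbitrary: p k) auto

lemma nleaves_pos [simp]: "0 < nleaves T"
  by (induction T) auto

lemma leaf_intervals_ne_Nil: "leaf_intervals T p k \<noteq> []"
  using length_leaf_intervals[of T p k] nleaves_pos[of T] by (metis less_irrefl list.size(3))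

section \<open>Tree pairs as piecewise affine maps\<close>

definition maps_piece :: "(real \<Rightarrow> real) \<Rightarrow> real \<times> nat \<Rightarrow> real \<times> nat \<Rightarrow> bool" where
  "maps_piece f = (\<lambda>(p, k) (q, m). \<forall>x. p \<le> x \<longrightarrow> x \<le> p + tau ^ k \<longrightarrow>
      f x = q + tau powi (int m - int k) * (x - p))"

lemma maps_piece_iff [simp]:
  "maps_piece f (p, k) (q, m) \<longleftrightarrow>
    (\<forall>x. p \<le> x \<longrightarrow> x \<le> p + tau ^ k \<longrightarrow> f x = q + tau powi (int m - int k) * (x - p))"
  by (simp add: maps_piece_def)

lemma maps_piece_endpoints:
  assumes "maps_piece f (p, k) (q, m)"
  shows "f p = q" "f (p + tau ^ k) = q + tau ^ m"
  using assms tau_power_pos[of k] tau_power_int_diff_mult[of m k] by auto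

lemma maps_piece_range:
  assumes "maps_piece f (p, k) (q, m)" "p \<le> x" "x \<le> p + tau ^ k"
  shows "q \<le> f x \<and> f x \<le> q + tau ^ m"
proof -
  have pos: "0 < tau powi (int m - int k)"
    using tau_pos by simp
  then have "tau powi (int m - int k) * (x - p) \<le> tau powi (int m - int k) * tau ^ k"
    using assms(3) by (intro mult_left_mono) auto
  then show ?thesis
    using assms pos tau_power_int_diff_mult[of m k] by simp
qed

lemma maps_piece_cong:
  "maps_piece f (p, k) v \<Longrightarrow> (\<And>x. p \<le> x \<Longrightarrow> x \<le> p + tau ^ k \<Longrightarrow> f x = g x) \<Longrightarrow> maps_piece g (p, k) v"
  by (cases v) simp

lemma maps_piece_id: "maps_piece id u u"
  by (cases u) simp

lemma maps_piece_comp: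
  assumes f: "maps_piece f u v" and g: "maps_piece g v w"
  shows "maps_piece (g \<circ> f) u w"
proof -
  obtain p k q m r n where uvw: "u = (p, k)" "v = (q, m)" "w = (r, n)"
    by (metis surj_pair)
  have "g (f x) = r + tau powi (int n - int k) * (x - p)" if "p \<le> x" "x \<le> p + tau ^ k" for x
  proof -
    have "g (f x) = r + tau powi (int n - int m) * (tau powi (int m - int k) * (x - p))"
      using f g maps_piece_range[of f p k q m x] that unfolding uvw by simp
    also have "\<dots> = r + tau powi (int n - int k) * (x - p)"
      using tau_power_int_add[of "int n - int m" "int m - int k"] by simp
    finally show ?thesis .
  qed
  then show ?thesis
    unfolding uvw by simp
qed

lemma maps_pieces_agree:
  assumes "list_all2 (maps_piece f) L M" "list_all2 (maps_piece g) L M"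
    and "(a, j) \<in> set L" "a \<le> x" "x \<le> a + tau ^ j"
  shows "f x = g x"
proof -
  obtain i where i: "i < length L" "L ! i = (a, j)"
    using assms(3) by (metis in_set_conv_nth)
  obtain b m where "M ! i = (b, m)"
    by (metis surj_pair)
  with list_all2_nthD[OF assms(1) i(1)] list_all2_nthD[OF assms(2) i(1)] i(2) assms(4,5) show ?thesis
    by simp
qed

lemma maps_pieces_apply_pl:
  "length L = length M \<Longrightarrow> tiles p L E \<Longrightarrow> tiles q M E' \<Longrightarrow> list_all2 (maps_piece (apply_pl L M)) L M"
proof (induction L M arbitrary: p q rule: list_induct2)
  case (Cons h L h' M)
  obtain k where h: "h = (p, k)" and tl: "tiles (p + tau ^ k) L E"
    using Cons.prems(1) by (cases h) auto
  obtain m where h': "h' = (q, m)" and tl': "tiles (q + tau ^ m) M E'"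
    using Cons.prems(2) by (cases h') auto
  have IH: "list_all2 (maps_piece (apply_pl L M)) L M"
    using Cons.IH[OF tl tl'] .
  have "apply_pl L M x = apply_pl (h # L) (h' # M) x"
    if aj: "(a, j) \<in> set L" "a \<le> x" for a j x
  proof (cases "x = p + tau ^ k")
    case True
    obtain j0 L' m0 M' where L: "L = (p + tau ^ k, j0) # L'" and M: "M = (q + tau ^ m, m0) # M'"
      using tl tl' aj(1) Cons.hyps by (cases L; cases M) auto
    have "apply_pl L M x = q + tau ^ m"
      using True tau_power_pos[of j0] unfolding L M by simp
    then show ?thesis
      using True h h' tau_power_int_diff_mult[of m k] by simp
  next
    case False
    then show ?thesis
      using tiles_piece_bounds[OF tl aj(1)] aj(2) h h' by simp
  qed
  then have "list_all2 (maps_piece (apply_pl (h # L) (h' # M))) L M"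
    by (auto intro!: list.rel_mono_strong[OF IH] elim!: maps_piece_cong)
  moreover have "maps_piece (apply_pl (h # L) (h' # M)) h h'"
    using h h' by simp
  ultimately show ?case
    by simp
qed simp

lemma tree_pair_outside: "x < 0 \<or> 1 < x \<Longrightarrow> tree_pair T1 T2 x = x"
  unfolding tree_pair_def by auto

lemma maps_pieces_tree_pair:
  assumes "nleaves T1 = nleaves T2"
  shows "list_all2 (maps_piece (tree_pair T1 T2)) (leaf_intervals T1 0 0) (leaf_intervals T2 0 0)"
proof -
  let ?L = "leaf_intervals T1 0 0" and ?M = "leaf_intervals T2 0 0"
  have pieces: "list_all2 (maps_piece (apply_pl ?L ?M)) ?L ?M"
    using assms tiles_leaf_intervals_01
    by (intro maps_pieces_apply_pl) (simp_all add: length_leaf_intervals)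
  have "apply_pl ?L ?M x = tree_pair T1 T2 x" if "(a, j) \<in> set ?L" "a \<le> x" "x \<le> a + tau ^ j"
    for a j x
    using tiles_piece_bounds[OF tiles_leaf_intervals_01 that(1)] that unfolding tree_pair_def by simp
  then show ?thesis
    by (auto intro!: list.rel_mono_strong[OF pieces] elim!: maps_piece_cong)
qed

lemma tree_pair_unique:
  assumes "nleaves T1 = nleaves T2" "\<And>x. x < 0 \<or> 1 < x \<Longrightarrow> f x = x"
    and "list_all2 (maps_piece f) (leaf_intervals T1 0 0) (leaf_intervals T2 0 0)"
  shows "f = tree_pair T1 T2"
proof
  fix x
  show "f x = tree_pair T1 T2 x"
  proof (cases "x < 0 \<or> 1 < x")
    case True
    then show ?thesis
      using assms(2) tree_pair_outside by simp
  next
    case False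
    then obtain a j where "(a, j) \<in> set (leaf_intervals T1 0 0)" "a \<le> x" "x \<le> a + tau ^ j"
      using tiles_cover[OF tiles_leaf_intervals_01[of T1] leaf_intervals_ne_Nil, of x] by auto
    then show ?thesis
      using maps_pieces_agree[OF assms(3) maps_pieces_tree_pair[OF assms(1)]] by blast
  qed
qed

lemma tree_pair_self: "tree_pair T T = id"
  by (rule tree_pair_unique[symmetric]) (simp_all add: list.rel_refl[of "maps_piece id"] maps_piece_id)

lemma tree_pair_comp:
  assumes "nleaves T1 = nleaves T2" "nleaves T2 = nleaves T3"
  shows "tree_pair T2 T3 \<circ> tree_pair T1 T2 = tree_pair T1 T3"
proof (rule tree_pair_unique)
  show "list_all2 (maps_piece (tree_pair T2 T3 \<circ> tree_pair T1 T2))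
      (leaf_intervals T1 0 0) (leaf_intervals T3 0 0)"
    using maps_pieces_tree_pair[OF assms(1)] maps_pieces_tree_pair[OF assms(2)]
    by (rule list_all2_trans[rotated]) (rule maps_piece_comp)
qed (use assms tree_pair_outside in simp_all)

lemma inv_tree_pair:
  assumes "nleaves T1 = nleaves T2"
  shows "inv (tree_pair T1 T2) = tree_pair T2 T1"
  by (rule inv_unique_comp) (simp_all add: assms tree_pair_comp tree_pair_self)

section \<open>Grafting trees onto the leaves of a tree\<close>

fun graft :: "tree \<Rightarrow> tree list \<Rightarrow> tree" where
  "graft Leaf ts = (case ts of [] \<Rightarrow> Leaf | t # _ \<Rightarrow> t)"
| "graft (X l r) ts = X (graft l (take (nleaves l) ts)) (graft r (drop (nleaves l) ts))"
| "graft (Y l r) ts = Y (graft l (take (nleaves l) ts)) (graft r (drop (nleaves l) ts))"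

definition subdivide :: "(real \<times> nat) list \<Rightarrow> tree list \<Rightarrow> (real \<times> nat) list" where
  "subdivide L ts = concat (map2 (\<lambda>(a, k) t. leaf_intervals t a k) L ts)"

lemma subdivide_Nil [simp]: "subdivide [] ts = []"
  by (simp add: subdivide_def)

lemma subdivide_Cons [simp]: "subdivide ((a, k) # L) (t # ts) = leaf_intervals t a k @ subdivide L ts"
  by (simp add: subdivide_def)

lemma subdivide_append:
  "length L1 = length ts1 \<Longrightarrow> subdivide (L1 @ L2) (ts1 @ ts2) = subdivide L1 ts1 @ subdivide L2 ts2"
  by (simp add: subdivide_def)

lemma length_subdivide:
  "length L = length ts \<Longrightarrow> length (subdivide L ts) = sum_list (map nleaves ts)"
proof (induction L ts rule: list_induct2)
  case (Cons h L t ts)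
  then show ?case
    by (cases h) (simp add: length_leaf_intervals)
qed simp

lemma leaf_intervals_graft:
  "length ts = nleaves T \<Longrightarrow> leaf_intervals (graft T ts) p k = subdivide (leaf_intervals T p k) ts"
proof (induction T arbitrary: ts p k)
  case Leaf
  then obtain t where "ts = [t]"
    by (cases ts) auto
  then show ?case
    by simp
next
  case (X l r)
  let ?ts1 = "take (nleaves l) ts" and ?ts2 = "drop (nleaves l) ts"
  have "subdivide (leaf_intervals (X l r) p k) ts =
      subdivide (leaf_intervals l p (k + 2) @ leaf_intervals r (p + tau ^ (k + 2)) (k + 1)) (?ts1 @ ?ts2)"
    by simp
  also have "\<dots> = subdivide (leaf_intervals l p (k + 2)) ?ts1 @
      subdivide (leaf_intervals r (p + tau ^ (k + 2)) (k + 1)) ?ts2"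
    using X.prems by (intro subdivide_append) (simp add: length_leaf_intervals)
  finally show ?case
    using X by simp
next
  case (Y l r)
  let ?ts1 = "take (nleaves l) ts" and ?ts2 = "drop (nleaves l) ts"
  have "subdivide (leaf_intervals (Y l r) p k) ts =
      subdivide (leaf_intervals l p (k + 1) @ leaf_intervals r (p + tau ^ (k + 1)) (k + 2)) (?ts1 @ ?ts2)"
    by simp
  also have "\<dots> = subdivide (leaf_intervals l p (k + 1)) ?ts1 @
      subdivide (leaf_intervals r (p + tau ^ (k + 1)) (k + 2)) ?ts2"
    using Y.prems by (intro subdivide_append) (simp add: length_leaf_intervals)
  finally show ?case
    using Y by simp
qed

lemma nleaves_graft: "length ts = nleaves T \<Longrightarrow> nleaves (graft T ts) = sum_list (map nleaves ts)"
  by (metis length_leaf_intervals leaf_intervals_graft length_subdivide)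

lemma tiles_subdivide: "tiles p L E \<Longrightarrow> length ts = length L \<Longrightarrow> tiles p (subdivide L ts) E"
proof (induction L arbitrary: p ts)
  case (Cons h L)
  obtain k where h: "h = (p, k)" and tl: "tiles (p + tau ^ k) L E"
    using Cons.prems(1) by (cases h) auto
  obtain t ts' where ts: "ts = t # ts'"
    using Cons.prems(2) by (cases ts) auto
  have "tiles (p + tau ^ k) (subdivide L ts') E"
    using Cons.IH[OF tl] Cons.prems(2) ts by simp
  with tiles_leaf_intervals[of p t k] show ?case
    unfolding h ts by (auto simp: tiles_append)
qed simp

lemma maps_piece_subinterval:
  assumes "maps_piece f (p, k) (q, m)" "0 \<le> d" "d + tau ^ (k + j) \<le> tau ^ k"
  shows "maps_piece f (p + d, k + j) (q + tau powi (int m - int k) * d, m + j)"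
proof -
  have "f x = q + tau powi (int m - int k) * d + tau powi (int m - int k) * (x - (p + d))"
    if "p + d \<le> x" "x \<le> p + d + tau ^ (k + j)" for x
    using assms that by (simp add: algebra_simps)
  then show ?thesis
    by simp
qed

lemma maps_pieces_leaf_intervals:
  "maps_piece f (p, k) (q, m) \<Longrightarrow> list_all2 (maps_piece f) (leaf_intervals t p k) (leaf_intervals t q m)"
proof (induction t arbitrary: p k q m)
  case (X l r)
  have "maps_piece f (p + 0, k + 2) (q + tau powi (int m - int k) * 0, m + 2)"
    using tau_power_split[of k] tau_power_pos[of "k + 1"]
    by (intro maps_piece_subinterval[OF X.prems]) simp_all
  moreover have "maps_piece f (p + tau ^ (k + 2), k + 1)
      (q + tau powi (int m - int k) * tau ^ (k + 2), m + 1)"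
    using tau_power_split[of k] tau_power_pos[of "k + 2"]
    by (intro maps_piece_subinterval[OF X.prems]) simp_all
  moreover have "tau powi (int m - int k) * tau ^ (k + 2) = tau ^ (m + 2)"
    using tau_power_int_diff_mult[of "m + 2" "k + 2"] by simp
  ultimately show ?case
    using X.IH by (auto intro!: list_all2_appendI)
next
  case (Y l r)
  have "maps_piece f (p + 0, k + 1) (q + tau powi (int m - int k) * 0, m + 1)"
    using tau_power_split[of k] tau_power_pos[of "k + 2"]
    by (intro maps_piece_subinterval[OF Y.prems]) simp_all
  moreover have "maps_piece f (p + tau ^ (k + 1), k + 2)
      (q + tau powi (int m - int k) * tau ^ (k + 1), m + 2)"
    using tau_power_split[of k] tau_power_pos[of "k + 1"]
    by (intro maps_piece_subinterval[OF Y.prems]) (simp_all add: add.commute)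
  moreover have "tau powi (int m - int k) * tau ^ (k + 1) = tau ^ (m + 1)"
    using tau_power_int_diff_mult[of "m + 1" "k + 1"] by simp
  ultimately show ?case
    using Y.IH by (auto intro!: list_all2_appendI)
qed simp

lemma maps_pieces_subdivide:
  "list_all2 (maps_piece f) L M \<Longrightarrow> length ts = length L \<Longrightarrow>
    list_all2 (maps_piece f) (subdivide L ts) (subdivide M ts)"
proof (induction ts arbitrary: L M)
  case (Cons t ts)
  obtain p k L' where L: "L = (p, k) # L'"
    using Cons.prems(2) by (cases L) auto
  obtain q m M' where M: "M = (q, m) # M'"
    using Cons.prems(1) L by (cases M) auto
  from Cons.prems show ?case
    unfolding L M using Cons.IH maps_pieces_leaf_intervals by (auto intro!: list_all2_appendI)
qed simp

lemma tree_pair_graft: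
  assumes "length ts = nleaves T1" "nleaves T1 = nleaves T2"
  shows "tree_pair (graft T1 ts) (graft T2 ts) = tree_pair T1 T2"
proof (rule tree_pair_unique[symmetric])
  show "nleaves (graft T1 ts) = nleaves (graft T2 ts)"
    using assms by (simp add: nleaves_graft)
  show "list_all2 (maps_piece (tree_pair T1 T2))
      (leaf_intervals (graft T1 ts) 0 0) (leaf_intervals (graft T2 ts) 0 0)"
    using assms maps_pieces_subdivide[OF maps_pieces_tree_pair[OF assms(2)], of ts]
    by (simp add: leaf_intervals_graft length_leaf_intervals)
qed (rule tree_pair_outside)

section \<open>Every tree pair is a product of the generators\<close>

abbreviation gens :: "(real \<Rightarrow> real) set" where
  "gens \<equiv> range xgen \<union> range ygen"

fun spine_with :: "nat \<Rightarrow> tree \<Rightarrow> tree" where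
  "spine_with 0 t = t"
| "spine_with (Suc n) t = X Leaf (spine_with n t)"

lemma spine_with_Suc_right: "spine_with (Suc n) t = spine_with n (X Leaf t)"
  by (induction n) auto

lemma nleaves_spine_with [simp]: "nleaves (spine_with n t) = n + nleaves t"
  by (induction n) auto

lemma spine_add: "spine (n + m) = spine_with n (spine m)"
  by (induction n) auto

lemma nleaves_spine [simp]: "nleaves (spine n) = n + 1"
  by (induction n) auto

lemma attach_spine: "attach c n (spine (Suc n)) = spine_with n (X c Leaf)"
  by (induction n) auto

lemma graft_spine_with:
  "length ts = nleaves t \<Longrightarrow> graft (spine_with n t) (replicate n Leaf @ ts) = spine_with n (graft t ts)"
  by (induction n) auto

lemma leaf_intervals_spine_with_cong:
  "(\<And>p k. leaf_intervals t p k = leaf_intervals t' p k) \<Longrightarrow>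
    leaf_intervals (spine_with n t) p k = leaf_intervals (spine_with n t') p k"
  by (induction n arbitrary: p k) auto

lemma tree_pair_spine_with_graft:
  assumes "length ts = nleaves A" "nleaves A = nleaves B"
  shows "tree_pair (spine_with n (graft A ts)) (spine_with n (graft B ts)) =
    tree_pair (spine_with n A) (spine_with n B)"
  using tree_pair_graft[of "replicate n Leaf @ ts" "spine_with n A" "spine_with n B"] assms
  by (simp add: graft_spine_with)

lemma xgen_eq: "xgen n = tree_pair (spine_with n (X (X Leaf Leaf) Leaf)) (spine_with n (X Leaf (X Leaf Leaf)))"
  unfolding xgen_def using attach_spine[of "X Leaf Leaf" n] spine_add[of n 2]
  by (simp add: numeral_eq_Suc)

lemma ygen_eq: "ygen n = tree_pair (spine_with n (X (Y Leaf Leaf) Leaf)) (spine_with n (X Leaf (X Leaf Leaf)))"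
  unfolding ygen_def using attach_spine[of "Y Leaf Leaf" n] spine_add[of n 2]
  by (simp add: numeral_eq_Suc)

lemma tree_pair_rotate_X: "tree_pair (spine_with n (X (X a b) c)) (spine_with n (X a (X b c))) = xgen n"
  using tree_pair_spine_with_graft[of "[a, b, c]" "X (X Leaf Leaf) Leaf" "X Leaf (X Leaf Leaf)" n]
  by (simp add: xgen_eq)

lemma tree_pair_rotate_Y: "tree_pair (spine_with n (X (Y a b) c)) (spine_with n (X a (X b c))) = ygen n"
  using tree_pair_spine_with_graft[of "[a, b, c]" "X (Y Leaf Leaf) Leaf" "X Leaf (X Leaf Leaf)" n]
  by (simp add: ygen_eq)

text \<open>Both trees cut \<open>[p, p + \<tau>\<^sup>k]\<close> into pieces of lengths \<open>\<tau>^(k+2), \<tau>^(k+3), \<tau>^(k+2)\<close>.\<close>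

lemma leaf_intervals_YY_eq_XX: "leaf_intervals (Y (Y a b) c) p k = leaf_intervals (X a (X b c)) p k"
proof -
  have "tau ^ (k + 1 + 2) + tau ^ (k + 1 + 1) = tau ^ (k + 1)"
    by (rule tau_power_split)
  then have "p + tau ^ (k + 2) + tau ^ (k + 1 + 2) = p + tau ^ (k + 1)"
    by (simp only: add.assoc one_add_one)
  then show ?thesis
    by (simp only: leaf_intervals.simps append_assoc add.assoc one_add_one)
qed

lemma tree_pair_Y_to_X: "tree_pair (spine_with n (Y a b)) (spine_with n (X a b)) = inv (ygen n)"
proof -
  have "tree_pair (spine_with n (Y a b)) (spine_with n (X a b)) =
      tree_pair (spine_with n (Y Leaf Leaf)) (spine_with n (X Leaf Leaf))"
    using tree_pair_spine_with_graft[of "[a, b]" "Y Leaf Leaf" "X Leaf Leaf" n] by simp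
  also have "\<dots> = tree_pair (spine_with n (Y (Y Leaf Leaf) Leaf)) (spine_with n (X (Y Leaf Leaf) Leaf))"
    using tree_pair_spine_with_graft[of "[Y Leaf Leaf, Leaf]" "Y Leaf Leaf" "X Leaf Leaf" n] by simp
  also have "\<dots> = tree_pair (spine_with n (X Leaf (X Leaf Leaf))) (spine_with n (X (Y Leaf Leaf) Leaf))"
    unfolding tree_pair_def
    by (simp only: leaf_intervals_spine_with_cong[OF leaf_intervals_YY_eq_XX])
  also have "\<dots> = inv (ygen n)"
    unfolding ygen_eq by (simp add: inv_tree_pair)
  finally show ?thesis .
qed

lemma generated_tree_pair_trans:
  assumes "tree_pair A B \<in> generated S" "tree_pair B C \<in> generated S"
    and "nleaves A = nleaves B" "nleaves B = nleaves C"
  shows "tree_pair A C \<in> generated S"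
  using gen_comp[OF assms(2,1)] tree_pair_comp[OF assms(3,4)] by simp

fun root_weight :: "tree \<Rightarrow> nat" where
  "root_weight Leaf = 0"
| "root_weight (X l r) = nleaves l"
| "root_weight (Y l r) = nleaves l + 1"

lemma root_weight_le: "root_weight t \<le> nleaves t"
  by (cases t) (simp_all add: Suc_leI)

text \<open>Right rotations (\<open>x\<^sub>n\<close>, \<open>y\<^sub>n\<close>) and relabelling a spine caret from \<open>Y\<close> to \<open>X\<close>
  (\<open>y\<^sub>n\<^sup>-\<^sup>1\<close>) move every tree onto the spine: each move decreases \<open>root_weight\<close> and keeps the
  number of leaves, and a leaf hanging off the spine lets us pass to the right subtree.\<close>

lemma tree_pair_spine_generated:
  "tree_pair (spine_with n t) (spine (n + nleaves t - 1)) \<in> generated gens"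
proof (induction t arbitrary: n rule: measure_induct_rule[where f = "\<lambda>t. 2 * nleaves t * nleaves t + root_weight t"])
  case (less t)
  show ?case
  proof (cases t)
    case Leaf
    have "tree_pair (spine_with n t) (spine (n + nleaves t - 1)) = id"
      using Leaf spine_add[of n 0] tree_pair_self by simp
    then show ?thesis
      by (simp only: gen_id)
  next
    case (Y a b)
    have "tree_pair (spine_with n (Y a b)) (spine_with n (X a b)) \<in> generated gens"
      unfolding tree_pair_Y_to_X by (intro gen_inv gen_base) simp
    with less[of "X a b" n] Y show ?thesis
      by (auto intro: generated_tree_pair_trans)
  next
    case tX: (X l c)
    show ?thesis
    proof (cases l)
      case Leaf
      have "2 * nleaves c * nleaves c + root_weight c < 2 * nleaves t * nleaves t + root_weight t"
        using root_weight_le[of c] unfolding tX Leaf by (simp add: algebra_simps)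
      with less[of c "Suc n"] show ?thesis
        unfolding tX Leaf by (simp add: spine_with_Suc_right[symmetric])
    next
      case (X a b)
      have "tree_pair (spine_with n (X (X a b) c)) (spine_with n (X a (X b c))) \<in> generated gens"
        unfolding tree_pair_rotate_X by (intro gen_base) simp
      with less[of "X a (X b c)" n] tX X show ?thesis
        by (auto intro: generated_tree_pair_trans simp: add.assoc)
    next
      case (Y a b)
      have "tree_pair (spine_with n (X (Y a b) c)) (spine_with n (X a (X b c))) \<in> generated gens"
        unfolding tree_pair_rotate_Y by (intro gen_base) simp
      with less[of "X a (X b c)" n] tX Y show ?thesis
        by (auto intro: generated_tree_pair_trans simp: add.assoc)
    qed
  qed
qed

lemma tree_pair_generated:
  assumes "nleaves T1 = nleaves T2"
  shows "tree_pair T1 T2 \<in> generated gens"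
proof -
  let ?S = "spine (nleaves T1 - 1)"
  have 1: "tree_pair T1 ?S \<in> generated gens"
    using tree_pair_spine_generated[of 0 T1] by simp
  have "tree_pair T2 ?S \<in> generated gens"
    using tree_pair_spine_generated[of 0 T2] assms by simp
  then have 2: "tree_pair ?S T2 \<in> generated gens"
    using gen_inv inv_tree_pair[of T2 ?S] assms by (metis nleaves_pos nleaves_spine Suc_pred' Suc_eq_plus1)
  show ?thesis
    using generated_tree_pair_trans[OF 1 2] assms by simp
qed

section \<open>Windows\<close>

lemma tau_conj_shift:
  assumes "a \<in> Ztau" "z \<in> Ztau"
  shows "tau_conj (a + tau ^ k * z) = tau_conj a + (- (1 + tau)) ^ k * tau_conj z"
  using assms by (simp add: tau_conj_add tau_conj_mult Ztau_mult Ztau_tau_power tau_conj_tau_power)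

lemma tau_conj_add_tau_power:
  "a \<in> Ztau \<Longrightarrow> tau_conj (a + tau ^ k) = tau_conj a + (- (1 + tau)) ^ k"
  using tau_conj_shift[OF _ Ztau_1, of a k] tau_conj_eq[of 1 0] by simp

lemma window_width:
  assumes "a \<in> Ztau" "lo \<le> tau_conj a" "tau_conj a \<le> hi"
    and "lo \<le> tau_conj (a + tau ^ k)" "tau_conj (a + tau ^ k) \<le> hi"
  shows "(1 + tau) ^ k \<le> hi - lo"
proof -
  have "\<bar>(- (1 + tau)) ^ k\<bar> \<le> hi - lo"
    using assms tau_conj_add_tau_power[OF assms(1), of k] by linarith
  moreover have "\<bar>- (1 + tau)\<bar> = 1 + tau"
    using tau_pos by simp
  ultimately show ?thesis
    by (simp only: power_abs)
qed

text \<open>The difference of \<open>z \<in> \<int>[\<tau>]\<close> and its conjugate is an integer multiple of \<open>\<surd>5 = 1 + 2\<tau>\<close>.\<close>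

lemma tau_conj_near_unit_interval_coeff:
  fixes a b :: int
  assumes z: "z = of_int a + of_int b * tau"
    and near: "0 < z" "z < 1" "- (1 + tau) < tau_conj z" "tau_conj z < 2 + tau"
  shows "b = - 1 \<or> b = 0 \<or> b = 1"
proof -
  define w where "w = of_int b * (1 + 2 * tau)"
  have diff: "z - tau_conj z = w"
    unfolding z w_def tau_conj_eq by (simp add: algebra_simps)
  have "b \<le> 1"
  proof (rule ccontr)
    assume "\<not> b \<le> 1"
    then have "2 * (1 + 2 * tau) \<le> w"
      unfolding w_def using tau_pos by (intro mult_right_mono) auto
    then have "2 + 4 * tau \<le> w"
      by simp
    then show False
      using diff near tau_bounds by linarith
  qed
  moreover have "- 1 \<le> b"
  proof (rule ccontr)
    assume "\<not> - 1 \<le> b"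
    then have "w \<le> - 2 * (1 + 2 * tau)"
      unfolding w_def using tau_pos by (intro mult_right_mono) auto
    then have "w \<le> - 2 - 4 * tau"
      by simp
    then show False
      using diff near tau_bounds by linarith
  qed
  ultimately show ?thesis
    by linarith
qed

lemma Ztau_unit_interval_conj:
  assumes "z \<in> Ztau" "0 < z" "z < 1"
  shows "tau_conj z \<le> - (1 + tau) \<or> 2 + tau \<le> tau_conj z"
proof (rule ccontr)
  assume "\<not> ?thesis"
  then have near: "- (1 + tau) < tau_conj z" "tau_conj z < 2 + tau"
    by auto
  obtain a b where z: "z = of_int a + of_int b * tau"
    using assms(1) Ztau_iff by blast
  have cz: "tau_conj z = of_int a - of_int b * (1 + tau)"
    unfolding z by (rule tau_conj_eq)
  from tau_conj_near_unit_interval_coeff[OF z assms(2,3) near]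
  consider "b = - 1" | "b = 0" | "b = 1"
    by blast
  then show False
  proof cases
    case 1
    then have "0 < a" "a < 2"
      using assms(2,3) z tau_bounds by auto
    with 1 near(2) cz show False
      by (simp add: \<open>a < 2\<close> \<open>0 < a\<close> algebra_simps flip: of_int_less_iff)
  next
    case 2
    then show False
      using assms(2,3) z by auto
  next
    case 3
    then have "- 1 < a" "a < 1"
      using assms(2,3) z tau_bounds by auto
    with 3 near(1) cz show False
      by simp
  qed
qed

lemma affine_between_in_interval:
  fixes A s t t1 t2 lo hi :: real
  assumes "lo \<le> A + s * t1" "A + s * t1 \<le> hi" "lo \<le> A + s * t2" "A + s * t2 \<le> hi"
    and "t1 \<le> t" "t \<le> t2"
  shows "lo \<le> A + s * t \<and> A + s * t \<le> hi"
proof (cases "0 \<le> s")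
  case True
  then have "s * t1 \<le> s * t" "s * t \<le> s * t2"
    using assms(5,6) by (simp_all add: mult_left_mono)
  then show ?thesis
    using assms by linarith
next
  case False
  then have "s * t \<le> s * t1" "s * t2 \<le> s * t"
    using assms(5,6) by (simp_all add: mult_left_mono_neg)
  then show ?thesis
    using assms by linarith
qed

definition window :: "real \<Rightarrow> real \<Rightarrow> real \<Rightarrow> real \<Rightarrow> real set" where
  "window lo hi a b = {y \<in> Ztau. a \<le> y \<and> y \<le> b \<and> lo \<le> tau_conj y \<and> tau_conj y \<le> hi}"

lemma window_union:
  "a \<le> m \<Longrightarrow> m \<le> b \<Longrightarrow> window lo hi a m \<union> window lo hi m b = window lo hi a b"
  by (auto simp: window_def)

lemma tau_conj_add_tau_power_Suc:
  assumes "a \<in> Ztau"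
  shows "tau_conj (a + tau ^ (k + 1)) = tau_conj a + (- (1 + tau)) ^ k * (- (1 + tau))"
  using tau_conj_add_tau_power[OF assms, of "k + 1"] by simp

lemma tau_conj_add_tau_power_Suc_Suc:
  assumes "a \<in> Ztau"
  shows "tau_conj (a + tau ^ (k + 2)) = tau_conj a + (- (1 + tau)) ^ k * (2 + tau)"
proof -
  have "(- (1 + tau)) ^ 2 = 2 + tau"
    using tau_sq by (simp add: power2_eq_square algebra_simps)
  then show ?thesis
    using tau_conj_add_tau_power[OF assms, of "k + 2"] by (simp only: power_add)
qed

lemma tau_conj_interior_point:
  assumes "a \<in> Ztau" "y \<in> Ztau" "a < y" "y < a + tau ^ k"
  obtains z where "z \<in> Ztau" "0 < z" "z < 1" "tau_conj y = tau_conj a + (- (1 + tau)) ^ k * tau_conj z"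
proof
  define z where "z = (y - a) * (1 + tau) ^ k"
  have "(1 + tau) ^ k * tau ^ k = 1"
    using tau_sq by (simp add: power_mult_distrib[symmetric] algebra_simps)
  then have yz: "y = a + tau ^ k * z"
    unfolding z_def by (simp add: algebra_simps)
  show "z \<in> Ztau"
    using assms(1,2) unfolding z_def by (simp add: Ztau_mult Ztau_diff Ztau_power Ztau_add Ztau_1 Ztau_tau)
  show "0 < z" "z < 1"
    using assms(3,4) tau_power_pos[of k] tau_pos unfolding yz by (simp_all add: zero_less_mult_iff)
  show "tau_conj y = tau_conj a + (- (1 + tau)) ^ k * tau_conj z"
    unfolding yz using tau_conj_shift[OF assms(1) \<open>z \<in> Ztau\<close>] .
qed

text \<open>An interior point is \<open>a + \<tau>\<^sup>k z\<close> with \<open>z \<in> \<int>[\<tau>] \<inter> (0, 1)\<close>, and its conjugate depends affinely on that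
  of \<open>z\<close>, which lies outside \<open>(-(1 + \<tau>), 2 + \<tau>)\<close>, the conjugates of \<open>\<tau>\<close> and \<open>\<tau>\<^sup>2\<close>. So the conjugate of
  \<open>a + \<tau>^(k+1)\<close> or of \<open>a + \<tau>^(k+2)\<close> lies between two conjugates in \<open>[lo, hi]\<close>.\<close>

lemma window_leaf:
  assumes a: "a \<in> Ztau"
    and ends: "lo \<le> tau_conj a" "tau_conj a \<le> hi" "lo \<le> tau_conj (a + tau ^ k)" "tau_conj (a + tau ^ k) \<le> hi"
    and out1: "\<not> (lo \<le> tau_conj (a + tau ^ (k + 1)) \<and> tau_conj (a + tau ^ (k + 1)) \<le> hi)"
    and out2: "\<not> (lo \<le> tau_conj (a + tau ^ (k + 2)) \<and> tau_conj (a + tau ^ (k + 2)) \<le> hi)"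
  shows "window lo hi a (a + tau ^ k) = {a, a + tau ^ k}"
proof
  show "{a, a + tau ^ k} \<subseteq> window lo hi a (a + tau ^ k)"
    using a ends tau_power_pos[of k] by (simp add: window_def Ztau_add Ztau_tau_power)
next
  show "window lo hi a (a + tau ^ k) \<subseteq> {a, a + tau ^ k}"
  proof
    fix y
    assume y: "y \<in> window lo hi a (a + tau ^ k)"
    show "y \<in> {a, a + tau ^ k}"
    proof (rule ccontr)
      assume "y \<notin> {a, a + tau ^ k}"
      with y have interior: "y \<in> Ztau" "a < y" "y < a + tau ^ k"
        by (auto simp: window_def)
      obtain z where z: "z \<in> Ztau" "0 < z" "z < 1"
        and cy: "tau_conj y = tau_conj a + (- (1 + tau)) ^ k * tau_conj z"
        using tau_conj_interior_point[OF a interior] by blast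
      let ?s = "(- (1 + tau)) ^ k" and ?A = "tau_conj a"
      have wy: "lo \<le> ?A + ?s * tau_conj z" "?A + ?s * tau_conj z \<le> hi"
        using y cy by (simp_all add: window_def)
      have w0: "lo \<le> ?A + ?s * 0" "?A + ?s * 0 \<le> hi"
        using ends by simp_all
      have w1: "lo \<le> ?A + ?s * 1" "?A + ?s * 1 \<le> hi"
        using ends tau_conj_add_tau_power[OF a, of k] by simp_all
      from Ztau_unit_interval_conj[OF z] show False
      proof
        assume "tau_conj z \<le> - (1 + tau)"
        from affine_between_in_interval[OF wy w0 this] tau_pos show False
          using out1 tau_conj_add_tau_power_Suc[OF a] by simp
      next
        assume "2 + tau \<le> tau_conj z"
        from affine_between_in_interval[OF w1 wy _ this] tau_pos show False
          using out2 tau_conj_add_tau_power_Suc_Suc[OF a] by simp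
      qed
    qed
  qed
qed

definition tree_breakpoints :: "tree \<Rightarrow> real \<Rightarrow> nat \<Rightarrow> real set" where
  "tree_breakpoints t a k = breakpoints (leaf_intervals t a k) (a + tau ^ k)"

lemma tree_breakpoints_Leaf: "tree_breakpoints Leaf a k = {a, a + tau ^ k}"
  by (simp add: tree_breakpoints_def)

lemma tree_breakpoints_X:
  "tree_breakpoints (X l r) a k = tree_breakpoints l a (k + 2) \<union> tree_breakpoints r (a + tau ^ (k + 2)) (k + 1)"
proof -
  have "a + tau ^ (k + 2) + tau ^ (k + 1) = a + tau ^ k"
    using tau_power_split[of k] by simp
  then show ?thesis
    using tiles_leaf_intervals[of "a + tau ^ (k + 2)" r "k + 1"]
    by (simp only: tree_breakpoints_def leaf_intervals.simps breakpoints_append_tiles)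
qed

lemma tree_breakpoints_Y:
  "tree_breakpoints (Y l r) a k = tree_breakpoints l a (k + 1) \<union> tree_breakpoints r (a + tau ^ (k + 1)) (k + 2)"
proof -
  have "a + tau ^ (k + 1) + tau ^ (k + 2) = a + tau ^ k"
    using tau_power_split[of k] by simp
  then show ?thesis
    using tiles_leaf_intervals[of "a + tau ^ (k + 1)" r "k + 2"]
    by (simp only: tree_breakpoints_def leaf_intervals.simps breakpoints_append_tiles)
qed

lemma window_depth_less:
  assumes "a \<in> Ztau" "lo \<le> tau_conj a" "tau_conj a \<le> hi"
    and "lo \<le> tau_conj (a + tau ^ k)" "tau_conj (a + tau ^ k) \<le> hi"
    and "hi - lo < (1 + tau) ^ N"
  shows "k < N"
proof (rule ccontr)
  assume "\<not> k < N"
  then have "(1 + tau) ^ N \<le> (1 + tau) ^ k"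
    using tau_pos by (intro power_increasing) auto
  with assms(6) window_width[OF assms(1-5)] show False
    by linarith
qed

text \<open>The tree is built top-down: split by an \<open>x\<close>-caret if its new breakpoint lies in the window,
  else by a \<open>y\<close>-caret if that one does, else stop.\<close>

lemma window_tree_exists:
  assumes "a \<in> Ztau" "lo \<le> tau_conj a" "tau_conj a \<le> hi"
    and "lo \<le> tau_conj (a + tau ^ k)" "tau_conj (a + tau ^ k) \<le> hi"
  shows "\<exists>t. tree_breakpoints t a k = window lo hi a (a + tau ^ k)"
proof -
  obtain N where N: "hi - lo < (1 + tau) ^ N"
    using real_arch_pow[of "1 + tau" "hi - lo"] tau_pos by auto
  show ?thesis
    using assms
  proof (induction "N - k" arbitrary: a k rule: less_induct)
    case less
    have "k < N"
      using window_depth_less[OF less.prems N] .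
    have split1: "a + tau ^ (k + 2) + tau ^ (k + 1) = a + tau ^ k"
      and split2: "a + tau ^ (k + 1) + tau ^ (k + 2) = a + tau ^ k"
      using tau_power_split[of k] by simp_all
    have Z: "a + tau ^ (k + 1) \<in> Ztau" "a + tau ^ (k + 2) \<in> Ztau"
      using less.prems(1) Ztau_add Ztau_tau_power by blast+
    have dec: "N - (k + 1) < N - k" "N - (k + 2) < N - k"
      using \<open>k < N\<close> by simp_all
    consider (X) "lo \<le> tau_conj (a + tau ^ (k + 2)) \<and> tau_conj (a + tau ^ (k + 2)) \<le> hi"
      | (Y) "lo \<le> tau_conj (a + tau ^ (k + 1)) \<and> tau_conj (a + tau ^ (k + 1)) \<le> hi"
      | (Leaf) "\<not> (lo \<le> tau_conj (a + tau ^ (k + 1)) \<and> tau_conj (a + tau ^ (k + 1)) \<le> hi)"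
        "\<not> (lo \<le> tau_conj (a + tau ^ (k + 2)) \<and> tau_conj (a + tau ^ (k + 2)) \<le> hi)"
      by blast
    then show ?case
    proof cases
      case X
      obtain l where l: "tree_breakpoints l a (k + 2) = window lo hi a (a + tau ^ (k + 2))"
        using less.hyps[OF dec(2) less.prems(1-3)] X by blast
      obtain r where r: "tree_breakpoints r (a + tau ^ (k + 2)) (k + 1) =
          window lo hi (a + tau ^ (k + 2)) (a + tau ^ k)"
        using less.hyps[OF dec(1) Z(2), unfolded split1] X less.prems(4,5) by blast
      have "tree_breakpoints (X l r) a k = window lo hi a (a + tau ^ k)"
        unfolding tree_breakpoints_X l r using split1 tau_power_pos[of "k + 1"] tau_power_pos[of "k + 2"]
        by (intro window_union) linarith+
      then show ?thesis ..
    next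
      case Y
      obtain l where l: "tree_breakpoints l a (k + 1) = window lo hi a (a + tau ^ (k + 1))"
        using less.hyps[OF dec(1) less.prems(1-3)] Y by blast
      obtain r where r: "tree_breakpoints r (a + tau ^ (k + 1)) (k + 2) =
          window lo hi (a + tau ^ (k + 1)) (a + tau ^ k)"
        using less.hyps[OF dec(2) Z(1), unfolded split2] Y less.prems(4,5) by blast
      have "tree_breakpoints (Y l r) a k = window lo hi a (a + tau ^ k)"
        unfolding tree_breakpoints_Y l r using split2 tau_power_pos[of "k + 1"] tau_power_pos[of "k + 2"]
        by (intro window_union) linarith+
      then show ?thesis ..
    next
      case Leaf
      then have "tree_breakpoints Leaf a k = window lo hi a (a + tau ^ k)"
        unfolding tree_breakpoints_Leaf using window_leaf[OF less.prems] by simp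
      then show ?thesis ..
    qed
  qed
qed

lemma refine_to_window:
  assumes "tiles p L E" "p \<in> Ztau" "\<forall>y \<in> breakpoints L E. lo \<le> tau_conj y \<and> tau_conj y \<le> hi"
  shows "\<exists>ts. length ts = length L \<and> breakpoints (subdivide L ts) E = window lo hi p E"
  using assms
proof (induction L arbitrary: p)
  case Nil
  then show ?case
    by (auto simp: window_def)
next
  case (Cons h L)
  obtain k where h: "h = (p, k)" and tl: "tiles (p + tau ^ k) L E"
    using Cons.prems(1) by (cases h) auto
  have Z: "p + tau ^ k \<in> Ztau"
    using Cons.prems(2) by (simp add: Ztau_add Ztau_tau_power)
  obtain ts where ts: "length ts = length L"
    and ts_window: "breakpoints (subdivide L ts) E = window lo hi (p + tau ^ k) E"
    using Cons.IH[OF tl Z] Cons.prems(3) h by auto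
  have "lo \<le> tau_conj p" "tau_conj p \<le> hi"
    "lo \<le> tau_conj (p + tau ^ k)" "tau_conj (p + tau ^ k) \<le> hi"
    using Cons.prems(3) h tiles_start_breakpoint[OF tl] by simp_all
  then obtain t where t: "tree_breakpoints t p k = window lo hi p (p + tau ^ k)"
    using window_tree_exists[OF Cons.prems(2)] by blast
  have "breakpoints (subdivide (h # L) (t # ts)) E =
      breakpoints (leaf_intervals t p k) (p + tau ^ k) \<union> breakpoints (subdivide L ts) E"
    using h tiles_subdivide[OF tl ts] by (simp add: breakpoints_append_tiles)
  also have "\<dots> = window lo hi p E"
    using t ts_window tiles_le[OF tl] tau_power_pos[of k] unfolding tree_breakpoints_def
    by (simp add: window_union)
  finally show ?case
    using ts by (intro exI[of _ "t # ts"]) simp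
qed

lemma refining_tree_exists:
  assumes "finite S" "0 \<in> S" "1 \<in> S"
  obtains W where "S \<inter> Ztau \<inter> {0..1} \<subseteq> breakpoints (leaf_intervals W 0 0) 1"
    and "\<And>L. tiles 0 L 1 \<Longrightarrow> breakpoints L 1 \<subseteq> S \<Longrightarrow>
      \<exists>ts. length ts = length L \<and> subdivide L ts = leaf_intervals W 0 0"
proof -
  define lo where "lo = Min (tau_conj ` S)"
  define hi where "hi = Max (tau_conj ` S)"
  have bounds: "lo \<le> tau_conj y \<and> tau_conj y \<le> hi" if "y \<in> S" for y
    unfolding lo_def hi_def using assms(1) that by simp
  obtain W where W: "tree_breakpoints W 0 0 = window lo hi 0 1"
    using window_tree_exists[OF Ztau_0, of lo hi 0] bounds assms(2,3) by auto
  then have W_breaks: "breakpoints (leaf_intervals W 0 0) 1 = window lo hi 0 1"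
    by (simp add: tree_breakpoints_def)
  show thesis
  proof
    show "S \<inter> Ztau \<inter> {0..1} \<subseteq> breakpoints (leaf_intervals W 0 0) 1"
      unfolding W_breaks window_def using bounds by auto
  next
    fix L
    assume L: "tiles 0 L 1" "breakpoints L 1 \<subseteq> S"
    then obtain ts where ts: "length ts = length L" "breakpoints (subdivide L ts) 1 = window lo hi 0 1"
      using refine_to_window[OF L(1) Ztau_0, of lo hi] bounds by blast
    have "breakpoints (subdivide L ts) 1 = breakpoints (leaf_intervals W 0 0) 1"
      using ts(2) W_breaks by simp
    then have "subdivide L ts = leaf_intervals W 0 0"
      using tiles_subdivide[OF L(1) ts(1)] tiles_leaf_intervals_01 tiles_eq_if_breakpoints_eq by blast
    with ts(1) show "\<exists>ts. length ts = length L \<and> subdivide L ts = leaf_intervals W 0 0"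
      by blast
  qed
qed

definition tree_pairs :: "(real \<Rightarrow> real) set" where
  "tree_pairs = {tree_pair T1 T2 | T1 T2. nleaves T1 = nleaves T2}"

lemma tree_pair_in_tree_pairs: "nleaves T1 = nleaves T2 \<Longrightarrow> tree_pair T1 T2 \<in> tree_pairs"
  by (auto simp: tree_pairs_def)

lemma tree_pair_cong:
  "leaf_intervals A 0 0 = leaf_intervals A' 0 0 \<Longrightarrow> leaf_intervals B 0 0 = leaf_intervals B' 0 0 \<Longrightarrow>
    tree_pair A B = tree_pair A' B'"
  by (intro ext) (simp add: tree_pair_def)

lemma nleaves_eq_if_leaf_intervals_eq:
  "leaf_intervals A 0 0 = leaf_intervals B 0 0 \<Longrightarrow> nleaves A = nleaves B"
  by (metis length_leaf_intervals)

lemma tree_pair_comp_in_tree_pairs: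
  assumes "nleaves T1 = nleaves T2" "nleaves T3 = nleaves T4"
  shows "tree_pair T3 T4 \<circ> tree_pair T1 T2 \<in> tree_pairs"
proof -
  let ?S = "breakpoints (leaf_intervals T2 0 0) 1 \<union> breakpoints (leaf_intervals T3 0 0) 1"
  have "0 \<in> ?S" "1 \<in> ?S"
    using tiles_start_breakpoint[OF tiles_leaf_intervals_01[of T2]] by (auto simp: breakpoints_def)
  then obtain W where refines: "\<And>L. tiles 0 L 1 \<Longrightarrow> breakpoints L 1 \<subseteq> ?S \<Longrightarrow>
      \<exists>ts. length ts = length L \<and> subdivide L ts = leaf_intervals W 0 0"
    using refining_tree_exists[of ?S] finite_breakpoints by (metis finite_Un)
  obtain ts where ts: "length ts = nleaves T2" "subdivide (leaf_intervals T2 0 0) ts = leaf_intervals W 0 0"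
    using refines[OF tiles_leaf_intervals_01] by (auto simp: length_leaf_intervals)
  obtain ss where ss: "length ss = nleaves T3" "subdivide (leaf_intervals T3 0 0) ss = leaf_intervals W 0 0"
    using refines[OF tiles_leaf_intervals_01] by (auto simp: length_leaf_intervals)
  have T2: "leaf_intervals (graft T2 ts) 0 0 = leaf_intervals W 0 0"
    using ts by (simp add: leaf_intervals_graft)
  have T3: "leaf_intervals (graft T3 ss) 0 0 = leaf_intervals W 0 0"
    using ss by (simp add: leaf_intervals_graft)
  have "tree_pair T1 T2 = tree_pair (graft T1 ts) W"
    using tree_pair_graft[of ts T1 T2] ts(1) assms(1) tree_pair_cong[OF refl T2] by simp
  moreover have "tree_pair T3 T4 = tree_pair W (graft T4 ss)"
    using tree_pair_graft[of ss T3 T4] ss(1) assms(2) tree_pair_cong[OF T3 refl] by simp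
  moreover have "nleaves (graft T1 ts) = nleaves W" "nleaves W = nleaves (graft T4 ss)"
    using nleaves_eq_if_leaf_intervals_eq[OF T2] nleaves_eq_if_leaf_intervals_eq[OF T3]
      nleaves_graft ts(1) ss(1) assms by auto
  ultimately show ?thesis
    using tree_pair_comp tree_pair_in_tree_pairs by auto
qed

lemma generated_eq_tree_pairs: "generated gens = tree_pairs"
proof
  show "generated gens \<subseteq> tree_pairs"
  proof
    fix f
    assume "f \<in> generated gens"
    then show "f \<in> tree_pairs"
    proof (induction rule: generated.induct)
      case gen_id
      then show ?case
        using tree_pair_in_tree_pairs[of Leaf Leaf] by (simp add: tree_pair_self id_def)
    next
      case (gen_base s)
      then show ?case
        by (auto simp: xgen_eq ygen_eq intro: tree_pair_in_tree_pairs)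
    next
      case (gen_comp f g)
      then obtain T1 T2 T3 T4 where "nleaves T1 = nleaves T2" "g = tree_pair T1 T2"
        and "nleaves T3 = nleaves T4" "f = tree_pair T3 T4"
        unfolding tree_pairs_def by blast
      then show ?case
        using tree_pair_comp_in_tree_pairs by (simp add: comp_def)
    next
      case (gen_inv f)
      then obtain T1 T2 where "nleaves T1 = nleaves T2" "f = tree_pair T1 T2"
        unfolding tree_pairs_def by blast
      then show ?case
        by (simp add: inv_tree_pair tree_pair_in_tree_pairs)
    qed
  qed
  show "tree_pairs \<subseteq> generated gens"
    unfolding tree_pairs_def using tree_pair_generated by auto
qed

section \<open>Tree pairs are exactly the elements of \<open>F\<^sub>\<tau>\<close>\<close>

lemma maps_pieces_endpoints:
  "list_all2 (maps_piece f) L M \<Longrightarrow> tiles p L E \<Longrightarrow> tiles q M E' \<Longrightarrow> L \<noteq> [] \<Longrightarrow> f p = q \<and> f E = E'"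
proof (induction L M arbitrary: p q rule: list_all2_induct)
  case (Cons h L h' M)
  obtain k where h: "h = (p, k)" and tl: "tiles (p + tau ^ k) L E"
    using Cons.prems(1) by (cases h) auto
  obtain m where h': "h' = (q, m)" and tl': "tiles (q + tau ^ m) M E'"
    using Cons.prems(2) by (cases h') auto
  have ends: "f p = q" "f (p + tau ^ k) = q + tau ^ m"
    using maps_piece_endpoints Cons.hyps(1) h h' by blast+
  show ?case
  proof (cases "L = []")
    case True
    with Cons.hyps(2) tl tl' ends show ?thesis
      by simp
  next
    case False
    with Cons.IH[OF tl tl'] ends show ?thesis
      by simp
  qed
qed simp

lemma maps_pieces_in_Ftau:
  assumes L: "tiles 0 L 1" "L \<noteq> []" and M: "tiles 0 M 1"
    and f: "list_all2 (maps_piece f) L M" "\<And>x. x \<notin> {0..1} \<Longrightarrow> f x = x"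
  shows "f \<in> Ftau"
proof -
  define ps where "ps = map fst L @ [1]"
  define es where "es = map2 (\<lambda>(p, k) (q, m). int m - int k) L M"
  have len: "length L = length M"
    using f(1) by (rule list_all2_lengthD)
  have f01: "f 0 = 0" "f 1 = 1"
    using maps_pieces_endpoints[OF f(1) L(1) M L(2)] by simp_all
  have "length ps = length es + 1" "last ps = 1" "sorted_wrt (<) ps"
    using len tiles_sorted[OF L(1)] unfolding ps_def es_def by simp_all
  moreover have "hd ps = 0"
    using L unfolding ps_def by (cases L) auto
  moreover have "set ps \<subseteq> Ztau"
    using tiles_Ztau[OF L(1) Ztau_0] unfolding ps_def breakpoints_def by auto
  moreover have "f x = f (ps ! i) + tau powi (es ! i) * (x - ps ! i)"
    if i: "i < length es" and x: "x \<in> {ps ! i .. ps ! (i + 1)}" for i x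
  proof -
    obtain p k q m where Li: "L ! i = (p, k)" and Mi: "M ! i = (q, m)"
      by (metis surj_pair)
    have iL: "i < length L"
      using i len unfolding es_def by simp
    have piece: "maps_piece f (p, k) (q, m)"
      using list_all2_nthD[OF f(1) iL] Li Mi by simp
    have "ps ! i = p" "ps ! (i + 1) = p + tau ^ k"
      using iL Li tiles_nth[OF L(1) iL] unfolding ps_def by (simp_all add: nth_append)
    moreover have "es ! i = int m - int k"
      using iL len Li Mi unfolding es_def by simp
    ultimately show ?thesis
      using piece x maps_piece_endpoints(1)[OF piece] by simp
  qed
  ultimately show ?thesis
    unfolding Ftau_def using f(2) f01 by blast
qed

lemma tree_pairs_subset_Ftau: "tree_pairs \<subseteq> Ftau"
  unfolding tree_pairs_def
  using maps_pieces_in_Ftau[OF tiles_leaf_intervals_01 leaf_intervals_ne_Nil tiles_leaf_intervals_01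
      maps_pieces_tree_pair] tree_pair_outside
  by force

lemma sorted_wrt_less_segment:
  fixes ps :: "real list"
  assumes "sorted_wrt (<) ps" "ps \<noteq> []" "hd ps \<le> x" "x < last ps"
  shows "\<exists>i. Suc i < length ps \<and> ps ! i \<le> x \<and> x < ps ! Suc i"
  using assms
proof (induction ps)
  case (Cons a ps)
  then have "ps \<noteq> []"
    by auto
  show ?case
  proof (cases "x < hd ps")
    case True
    with Cons.prems \<open>ps \<noteq> []\<close> show ?thesis
      by (intro exI[of _ 0]) (simp add: hd_conv_nth)
  next
    case False
    with Cons.IH \<open>ps \<noteq> []\<close> Cons.prems obtain i where "Suc i < length ps" "ps ! i \<le> x" "x < ps ! Suc i"
      by auto
    then show ?thesis
      by (intro exI[of _ "Suc i"]) simp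
  qed
qed simp

lemma tiles_piece_in_segment:
  assumes L: "tiles p L E" "(a, k) \<in> set L"
    and ps: "sorted_wrt (<) ps" "set ps \<subseteq> breakpoints L E" "ps \<noteq> []" "hd ps \<le> p" "last ps = E"
  shows "\<exists>i. Suc i < length ps \<and> ps ! i \<le> a \<and> a + tau ^ k \<le> ps ! Suc i"
proof -
  have "p \<le> a" "a + tau ^ k \<le> E"
    using tiles_piece_bounds[OF L] by auto
  then have "hd ps \<le> a" "a < last ps"
    using ps(4,5) tau_power_pos[of k] by linarith+
  then obtain i where i: "Suc i < length ps" "ps ! i \<le> a" "a < ps ! Suc i"
    using sorted_wrt_less_segment[OF ps(1,3)] by blast
  moreover have "ps ! Suc i \<in> breakpoints L E"
    using i(1) ps(2) nth_mem by blast
  ultimately show ?thesis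
    using tiles_piece_gap[OF L] by fastforce
qed

text \<open>A map that is affine with slope a power of \<open>\<tau>\<close> on each interval of a tiling and increases
  by at most \<open>1\<close> overall maps each interval onto an interval of length at most \<open>1\<close>,
  hence of the form \<open>[q, q + \<tau>\<^sup>m]\<close> with \<open>m \<ge> 0\<close>.\<close>

lemma maps_pieces_image_exists:
  assumes "tiles p L E"
    and "\<forall>(a, k) \<in> set L. \<exists>e. \<forall>x. a \<le> x \<longrightarrow> x \<le> a + tau ^ k \<longrightarrow> f x = f a + tau powi e * (x - a)"
    and "f E \<le> f p + 1"
  shows "\<exists>M. tiles (f p) M (f E) \<and> list_all2 (maps_piece f) L M"
  using assms
proof (induction L arbitrary: p)
  case Nil
  then show ?case
    by simp
next
  case (Cons h L)
  obtain k where h: "h = (p, k)" and tl: "tiles (p + tau ^ k) L E"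
    using Cons.prems(1) by (cases h) auto
  obtain e where e: "\<forall>x. p \<le> x \<longrightarrow> x \<le> p + tau ^ k \<longrightarrow> f x = f p + tau powi e * (x - p)"
    using Cons.prems(2) unfolding h by fastforce
  have "f (p + tau ^ k) = f p + tau powi e * tau ^ k"
    using e[rule_format, of "p + tau ^ k"] tau_power_pos[of k] by simp
  also have "tau powi e * tau ^ k = tau powi (e + int k)"
    by (simp add: tau_power_int_add)
  finally have step: "f (p + tau ^ k) = f p + tau powi (e + int k)" .
  moreover have "0 < tau powi (e + int k)"
    using tau_pos by simp
  ultimately have "f E \<le> f (p + tau ^ k) + 1"
    using Cons.prems(3) by linarith
  moreover have "\<forall>(a, k) \<in> set L. \<exists>e. \<forall>x. a \<le> x \<longrightarrow> x \<le> a + tau ^ k \<longrightarrow> f x = f a + tau powi e * (x - a)"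
    using Cons.prems(2) by simp
  ultimately obtain M where M: "tiles (f (p + tau ^ k)) M (f E)" "list_all2 (maps_piece f) L M"
    using Cons.IH[OF tl] by blast
  have "tau powi (e + int k) \<le> 1"
    using step tiles_le[OF M(1)] Cons.prems(3) by linarith
  then have nonneg: "0 \<le> e + int k"
    by (rule tau_power_int_le_1_imp_nonneg)
  then have "int (nat (e + int k)) - int k = e"
    by simp
  then have "maps_piece f (p, k) (f p, nat (e + int k))"
    using e by (simp only: maps_piece_iff)
  then have "list_all2 (maps_piece f) (h # L) ((f p, nat (e + int k)) # M)"
    unfolding h using M(2) by (rule list.rel_intros(2))
  moreover have "tiles (f p) ((f p, nat (e + int k)) # M) (f E)"
    using M(1) step nonneg by (simp add: power_int_def)
  ultimately show ?case
    by blast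
qed

lemma sorted_wrt_less_hd_last:
  fixes ps :: "real list"
  assumes "sorted_wrt (<) ps" "y \<in> set ps"
  shows "hd ps \<le> y \<and> y \<le> last ps"
proof -
  have "sorted ps"
    using assms(1) by (rule sorted_wrt_mono_rel[rotated]) simp
  moreover obtain j where j: "j < length ps" "ps ! j = y"
    using assms(2) by (metis in_set_conv_nth)
  have "ps ! 0 \<le> y" "y \<le> ps ! (length ps - 1)"
    using \<open>sorted ps\<close> j unfolding sorted_iff_nth_mono by auto
  moreover have "ps \<noteq> []"
    using j by auto
  ultimately show ?thesis
    by (simp add: hd_conv_nth last_conv_nth)
qed

lemma Ftau_affine_on_tree:
  assumes "f \<in> Ftau"
  obtains W where "\<And>a k. (a, k) \<in> set (leaf_intervals W 0 0) \<Longrightarrow>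
    \<exists>e. \<forall>x. a \<le> x \<longrightarrow> x \<le> a + tau ^ k \<longrightarrow> f x = f a + tau powi e * (x - a)"
proof -
  obtain ps es where
    ps: "length ps = length es + 1" "hd ps = 0" "last ps = 1" "sorted_wrt (<) ps" "set ps \<subseteq> Ztau"
    and affine: "\<forall>i < length es. \<forall>x \<in> {ps ! i .. ps ! (i + 1)}.
        f x = f (ps ! i) + tau powi (es ! i) * (x - ps ! i)"
    using assms unfolding Ftau_def by blast
  have "ps \<noteq> []"
    using ps(1) by auto
  then have "0 \<in> set ps" "1 \<in> set ps"
    using ps(2,3) by (metis hd_in_set, metis last_in_set)
  then obtain W where "set ps \<inter> Ztau \<inter> {0..1} \<subseteq> breakpoints (leaf_intervals W 0 0) 1"
    using refining_tree_exists[of "set ps"] by blast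
  moreover have "set ps \<subseteq> Ztau \<inter> {0..1}"
    using ps sorted_wrt_less_hd_last[OF ps(4)] by auto
  ultimately have ps_breaks: "set ps \<subseteq> breakpoints (leaf_intervals W 0 0) 1"
    by blast
  have "\<exists>e. \<forall>x. a \<le> x \<longrightarrow> x \<le> a + tau ^ k \<longrightarrow> f x = f a + tau powi e * (x - a)"
    if piece: "(a, k) \<in> set (leaf_intervals W 0 0)" for a k
  proof -
    obtain i where i: "Suc i < length ps" "ps ! i \<le> a" "a + tau ^ k \<le> ps ! Suc i"
      using tiles_piece_in_segment[OF tiles_leaf_intervals_01 piece ps(4) ps_breaks \<open>ps \<noteq> []\<close>] ps(2,3)
      by auto
    then have on_segment: "f x = f (ps ! i) + tau powi (es ! i) * (x - ps ! i)"
      if "a \<le> x" "x \<le> a + tau ^ k" for x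
      using affine[rule_format, of i x] ps(1) i that by simp
    have "f x = f a + tau powi (es ! i) * (x - a)" if "a \<le> x" "x \<le> a + tau ^ k" for x
      using on_segment[OF that] on_segment[of a] that tau_power_pos[of k] by (simp add: algebra_simps)
    then show ?thesis
      by blast
  qed
  then show thesis
    using that by blast
qed

lemma maps_pieces_onto_tiling_in_tree_pairs:
  assumes M: "tiles 0 M 1" "list_all2 (maps_piece f) (leaf_intervals W 0 0) M"
    and out: "\<And>x. x < 0 \<or> 1 < x \<Longrightarrow> f x = x"
  shows "f \<in> tree_pairs"
proof -
  have "0 \<in> breakpoints M 1" "1 \<in> breakpoints M 1"
    using tiles_start_breakpoint[OF M(1)] by (simp_all add: breakpoints_def)
  then obtain W' where "\<And>L. tiles 0 L 1 \<Longrightarrow> breakpoints L 1 \<subseteq> breakpoints M 1 \<Longrightarrow>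
      \<exists>ts. length ts = length L \<and> subdivide L ts = leaf_intervals W' 0 0"
    using refining_tree_exists[OF finite_breakpoints] by blast
  then obtain ts where ts: "length ts = length M" "subdivide M ts = leaf_intervals W' 0 0"
    using M(1) by blast
  have "length ts = nleaves W"
    using ts(1) list_all2_lengthD[OF M(2)] by (simp add: length_leaf_intervals)
  then have pieces: "list_all2 (maps_piece f) (leaf_intervals (graft W ts) 0 0) (leaf_intervals W' 0 0)"
    using maps_pieces_subdivide[OF M(2), of ts] ts by (simp add: leaf_intervals_graft length_leaf_intervals)
  then have leaves: "nleaves (graft W ts) = nleaves W'"
    using list_all2_lengthD by (metis length_leaf_intervals)
  have "f = tree_pair (graft W ts) W'"
    using leaves out pieces by (rule tree_pair_unique)
  then show ?thesis
    using leaves tree_pair_in_tree_pairs by simp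
qed

lemma Ftau_subset_tree_pairs: "Ftau \<subseteq> tree_pairs"
proof
  fix f
  assume f: "f \<in> Ftau"
  then have out: "\<And>x. x < 0 \<or> 1 < x \<Longrightarrow> f x = x" and f01: "f 0 = 0" "f 1 = 1"
    unfolding Ftau_def by auto
  obtain W where "\<And>a k. (a, k) \<in> set (leaf_intervals W 0 0) \<Longrightarrow>
      \<exists>e. \<forall>x. a \<le> x \<longrightarrow> x \<le> a + tau ^ k \<longrightarrow> f x = f a + tau powi e * (x - a)"
    using Ftau_affine_on_tree[OF f] by blast
  then have "\<exists>M. tiles (f 0) M (f 1) \<and> list_all2 (maps_piece f) (leaf_intervals W 0 0) M"
    using f01 by (intro maps_pieces_image_exists[OF tiles_leaf_intervals_01]) auto
  then obtain M where "tiles 0 M 1" "list_all2 (maps_piece f) (leaf_intervals W 0 0) M"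
    using f01 by auto
  then show "f \<in> tree_pairs"
    using out by (rule maps_pieces_onto_tiling_in_tree_pairs)
qed

theorem mainTheorem10:
  shows "generated (range xgen \<union> range ygen) = Ftau"
  using generated_eq_tree_pairs Ftau_subset_tree_pairs tree_pairs_subset_Ftau by blast

end
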